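(* Every Alster space is finitely powerfully Hurewicz, i.e., if $X$ is Alster then $X^k$ is Hurewicz for every positive integer $k$.
   Context: A topological space $X$ is Alster if every cover of $X$ by $G_\delta$ subsets of $X$ such that each compact subset of $X$ is included in some member of the cover has a countable subcover. A point-cofinite cover of a space is an infinite open cover such that each point of the space belongs to all but finitely many members of the cover. A space $X$ is Hurewicz if for each sequence $\{\mathcal{U}_n\}_{n<\omega}$ of open covers of $X$, none of which has a finite subcover, there are finite $\mathcal{F}_n\subseteq\mathcal{U}_n$ such that $\{\bigcup\mathcal{F}_n : n<\omega\}$ is a point-cofinite cover of $X$. Finite powers carry the product topology. No separation axioms are assumed. *)

theory Defs
  imports "HOL-Analysis.Analysis"
begin

definition Alster :: "'a topology \<Rightarrow> bool" where
  "Alster X \<longleftrightarrow>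
     (\<forall>\<G>. (\<forall>G\<in>\<G>. gdelta_in X G) \<and> topspace X \<subseteq> \<Union>\<G>
          \<and> (\<forall>K. compactin X K \<longrightarrow> (\<exists>G\<in>\<G>. K \<subseteq> G))
        \<longrightarrow> (\<exists>\<C>\<subseteq>\<G>. countable \<C> \<and> topspace X \<subseteq> \<Union>\<C>))"

definition open_cover :: "'a topology \<Rightarrow> 'a set set \<Rightarrow> bool" where
  "open_cover X \<U> \<longleftrightarrow> (\<forall>U\<in>\<U>. openin X U) \<and> topspace X \<subseteq> \<Union>\<U>"

definition point_cofinite_cover :: "'a topology \<Rightarrow> 'a set set \<Rightarrow> bool" where
  "point_cofinite_cover X \<U> \<longleftrightarrow>
     infinite \<U> \<and> open_cover X \<U> \<and> (\<forall>x\<in>topspace X. finite {U\<in>\<U>. x \<notin> U})"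

definition Hurewicz :: "'a topology \<Rightarrow> bool" where
  "Hurewicz X \<longleftrightarrow>
     (\<forall>\<U> :: nat \<Rightarrow> 'a set set.
        (\<forall>n. open_cover X (\<U> n) \<and> \<not> (\<exists>\<F>\<subseteq>\<U> n. finite \<F> \<and> topspace X \<subseteq> \<Union>\<F>))
        \<longrightarrow> (\<exists>\<F> :: nat \<Rightarrow> 'a set set. (\<forall>n. finite (\<F> n) \<and> \<F> n \<subseteq> \<U> n)
               \<and> point_cofinite_cover X (range (\<lambda>n. \<Union>(\<F> n)))))"

end

theory Submission
  imports Defs
begin

text \<open>Every compact set \<open>K\<close> of an Alster space is contained in a \<open>G\<^sub>\<delta>\<close> set built from
  finitely many members of each open cover; the Alster property selects countably many
  such \<open>K\<close> whose \<open>G\<^sub>\<delta>\<close> sets cover the space, and enumerating them gives the Hurewicz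
  selections. The Alster property passes to finite powers because it is preserved by
  continuous surjections and by binary products: a \<open>G\<^sub>\<delta>\<close> set containing a compact rectangle
  contains a \<open>G\<^sub>\<delta>\<close> rectangle around it (Wallace), and applying the Alster property first in
  the second factor, then in the first, yields countably many rectangles covering the product.\<close>

lemma Alster_countable_subfamily:
  assumes "Alster X"
    and "\<And>K. compactin X K \<Longrightarrow> gdelta_in X (G K)"
    and "\<And>K. compactin X K \<Longrightarrow> K \<subseteq> G K"
  obtains \<K> where "countable \<K>" "\<forall>K\<in>\<K>. compactin X K" "topspace X \<subseteq> \<Union>(G ` \<K>)"
proof -
  let ?\<G> = "G ` {K. compactin X K}"
  have "topspace X \<subseteq> \<Union>?\<G>"
  proof
    fix x assume "x \<in> topspace X"
    then have "compactin X {x}" by simp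
    then show "x \<in> \<Union>?\<G>" using assms(3) by blast
  qed
  then have "(\<forall>G'\<in>?\<G>. gdelta_in X G') \<and> topspace X \<subseteq> \<Union>?\<G>
      \<and> (\<forall>K. compactin X K \<longrightarrow> (\<exists>G'\<in>?\<G>. K \<subseteq> G'))"
    using assms(2,3) by blast
  then have "\<exists>\<C>\<subseteq>?\<G>. countable \<C> \<and> topspace X \<subseteq> \<Union>\<C>"
    using \<open>Alster X\<close> unfolding Alster_def by blast
  then obtain \<K> where "countable \<K>" "\<K> \<subseteq> {K. compactin X K}" "topspace X \<subseteq> \<Union>(G ` \<K>)"
    by (metis countable_subset_image)
  then show thesis
    using that by blast
qed

lemma compact_space_imp_Alster:
  assumes "compact_space X"
  shows "Alster X"
  unfolding Alster_def
proof (intro allI impI, elim conjE)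
  fix \<G> assume "\<forall>K. compactin X K \<longrightarrow> (\<exists>G\<in>\<G>. K \<subseteq> G)"
  then obtain G where "G \<in> \<G>" "topspace X \<subseteq> G"
    using assms unfolding compact_space_def by blast
  then show "\<exists>\<C>\<subseteq>\<G>. countable \<C> \<and> topspace X \<subseteq> \<Union>\<C>"
    by (intro exI[of _ "{G}"]) auto
qed

lemma gdelta_in_continuous_map_preimage:
  assumes f: "continuous_map X Y f" and S: "gdelta_in Y S"
  shows "gdelta_in X {x \<in> topspace X. f x \<in> S}"
proof -
  obtain C :: "nat \<Rightarrow> _" where C: "\<And>n. openin Y (C n)" "\<Inter>(range C) = S"
    using S unfolding gdelta_in_descending by blast
  have "{x \<in> topspace X. f x \<in> S} = (\<Inter>n. {x \<in> topspace X. f x \<in> C n})"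
    using C(2) by auto
  also have "gdelta_in X \<dots>"
    by (rule gdelta_in_Inter)
      (auto intro!: open_imp_gdelta_in openin_continuous_map_preimage[OF f C(1)])
  finally show ?thesis .
qed

lemma Alster_continuous_image:
  assumes "Alster X" and f: "continuous_map X Y f" and surj: "f ` topspace X = topspace Y"
  shows "Alster Y"
  unfolding Alster_def
proof (intro allI impI, elim conjE)
  fix \<G> assume gd: "\<forall>G\<in>\<G>. gdelta_in Y G"
    and cpt: "\<forall>K. compactin Y K \<longrightarrow> (\<exists>G\<in>\<G>. K \<subseteq> G)"
  define G where "G K = (SOME G. G \<in> \<G> \<and> f ` K \<subseteq> G)" for K
  have G: "G K \<in> \<G> \<and> f ` K \<subseteq> G K" if "compactin X K" for K
  proof -
    have "\<exists>G. G \<in> \<G> \<and> f ` K \<subseteq> G"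
      using cpt image_compactin[OF that f] by blast
    then show ?thesis
      unfolding G_def by (rule someI_ex)
  qed
  define pre where "pre K = {x \<in> topspace X. f x \<in> G K}" for K
  have "gdelta_in X (pre K)" if "compactin X K" for K
    unfolding pre_def using G[OF that] gd by (simp add: gdelta_in_continuous_map_preimage[OF f])
  moreover have "K \<subseteq> pre K" if "compactin X K" for K
    unfolding pre_def using G[OF that] compactin_subset_topspace[OF that] by blast
  ultimately obtain \<K> where \<K>: "countable \<K>" "\<forall>K\<in>\<K>. compactin X K"
    and cov: "topspace X \<subseteq> \<Union>(pre ` \<K>)"
    by (rule Alster_countable_subfamily[OF \<open>Alster X\<close>])
  have "topspace Y \<subseteq> \<Union>(G ` \<K>)"
  proof
    fix y assume "y \<in> topspace Y"
    then obtain x where "x \<in> topspace X" "y = f x"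
      using surj by blast
    then show "y \<in> \<Union>(G ` \<K>)"
      using cov unfolding pre_def by blast
  qed
  moreover have "G ` \<K> \<subseteq> \<G>"
    using G \<K>(2) by blast
  ultimately show "\<exists>\<C>\<subseteq>\<G>. countable \<C> \<and> topspace Y \<subseteq> \<Union>\<C>"
    using \<K>(1) by blast
qed

lemma Wallace_theorem_prod_topology_gdelta:
  assumes G: "gdelta_in (prod_topology X Y) G" and K: "compactin X K" and L: "compactin Y L"
    and "K \<times> L \<subseteq> G"
  obtains A B where "gdelta_in X A" "gdelta_in Y B" "K \<subseteq> A" "L \<subseteq> B" "A \<times> B \<subseteq> G"
proof -
  obtain W :: "nat \<Rightarrow> _" where W: "\<And>n. openin (prod_topology X Y) (W n)" "\<Inter>(range W) = G"
    using G unfolding gdelta_in_descending by blast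
  have "\<forall>n. \<exists>U V. openin X U \<and> openin Y V \<and> K \<subseteq> U \<and> L \<subseteq> V \<and> U \<times> V \<subseteq> W n"
  proof
    fix n
    have "K \<times> L \<subseteq> W n"
      using \<open>K \<times> L \<subseteq> G\<close> W(2) by blast
    then obtain U V where "openin X U" "openin Y V" "K \<subseteq> U" "L \<subseteq> V" "U \<times> V \<subseteq> W n"
      by (rule Wallace_theorem_prod_topology[OF K L W(1)])
    then show "\<exists>U V. openin X U \<and> openin Y V \<and> K \<subseteq> U \<and> L \<subseteq> V \<and> U \<times> V \<subseteq> W n"
      by blast
  qed
  from choice[OF this] obtain U
    where "\<forall>n. \<exists>V. openin X (U n) \<and> openin Y V \<and> K \<subseteq> U n \<and> L \<subseteq> V \<and> U n \<times> V \<subseteq> W n" ..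
  from choice[OF this] obtain V
    where UV: "\<forall>n. openin X (U n) \<and> openin Y (V n) \<and> K \<subseteq> U n \<and> L \<subseteq> V n \<and> U n \<times> V n \<subseteq> W n" ..
  show thesis
  proof
    show "gdelta_in X (\<Inter>(range U))"
      by (rule gdelta_in_Inter) (use UV in \<open>auto intro: open_imp_gdelta_in\<close>)
    show "gdelta_in Y (\<Inter>(range V))"
      by (rule gdelta_in_Inter) (use UV in \<open>auto intro: open_imp_gdelta_in\<close>)
    show "K \<subseteq> \<Inter>(range U)" "L \<subseteq> \<Inter>(range V)"
      using UV by (simp_all add: INF_greatest)
    have "\<Inter>(range U) \<times> \<Inter>(range V) \<subseteq> (\<Inter>n. U n \<times> V n)"
      by blast
    also have "\<dots> \<subseteq> (\<Inter>n. W n)"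
      using UV by (intro INF_mono') blast
    finally show "\<Inter>(range U) \<times> \<Inter>(range V) \<subseteq> G"
      using W(2) by simp
  qed
qed

lemma Alster_gdelta_tube:
  assumes "Alster Y" and K: "compactin X K"
    and AB: "\<And>L. compactin Y L \<Longrightarrow> gdelta_in X (A L) \<and> gdelta_in Y (B L) \<and> K \<subseteq> A L \<and> L \<subseteq> B L"
  obtains A' \<L> where "gdelta_in X A'" "K \<subseteq> A'" "countable \<L>" "\<forall>L\<in>\<L>. compactin Y L"
    "A' \<times> topspace Y \<subseteq> (\<Union>L\<in>\<L>. A L \<times> B L)"
proof -
  have "gdelta_in Y (B L)" "L \<subseteq> B L" if "compactin Y L" for L
    using AB[OF that] by simp_all
  then obtain \<L> where \<L>: "countable \<L>" "\<forall>L\<in>\<L>. compactin Y L"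
    and cov: "topspace Y \<subseteq> \<Union>(B ` \<L>)"
    by (rule Alster_countable_subfamily[OF \<open>Alster Y\<close>])
  define A' where "A' = \<Inter>(insert (topspace X) (A ` \<L>))"
  show thesis
  proof
    show "gdelta_in X A'"
      unfolding A'_def by (rule gdelta_in_Inter) (use AB \<L> in auto)
    have "K \<subseteq> A L" if "L \<in> \<L>" for L
      using AB \<L>(2) that by blast
    then show "K \<subseteq> A'"
      unfolding A'_def using compactin_subset_topspace[OF K] by blast
    show "A' \<times> topspace Y \<subseteq> (\<Union>L\<in>\<L>. A L \<times> B L)"
    proof (clarify)
      fix x y assume "x \<in> A'" "y \<in> topspace Y"
      then obtain L where "L \<in> \<L>" "y \<in> B L"
        using cov by blast
      moreover have "x \<in> A L"
        using \<open>x \<in> A'\<close> \<open>L \<in> \<L>\<close> unfolding A'_def by blast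
      ultimately show "(x, y) \<in> (\<Union>L\<in>\<L>. A L \<times> B L)"
        by blast
    qed
  qed (use \<L> in auto)
qed

lemma Alster_prod_countable_boxes:
  assumes "Alster X" "Alster Y"
    and AB: "\<And>K L. \<lbrakk>compactin X K; compactin Y L\<rbrakk> \<Longrightarrow>
      gdelta_in X (A K L) \<and> gdelta_in Y (B K L) \<and> K \<subseteq> A K L \<and> L \<subseteq> B K L"
  obtains \<P> where "countable \<P>" "\<forall>(K, L)\<in>\<P>. compactin X K \<and> compactin Y L"
    "topspace X \<times> topspace Y \<subseteq> (\<Union>(K, L)\<in>\<P>. A K L \<times> B K L)"
proof -
  define tube where "tube K A' \<L> \<longleftrightarrow> gdelta_in X A' \<and> K \<subseteq> A' \<and> countable \<L>
      \<and> (\<forall>L\<in>\<L>. compactin Y L) \<and> A' \<times> topspace Y \<subseteq> (\<Union>L\<in>\<L>. A K L \<times> B K L)" for K A' \<L>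
  have "\<exists>A' \<L>. tube K A' \<L>" if K: "compactin X K" for K
  proof -
    obtain A' \<L> where "gdelta_in X A'" "K \<subseteq> A'" "countable \<L>" "\<forall>L\<in>\<L>. compactin Y L"
      "A' \<times> topspace Y \<subseteq> (\<Union>L\<in>\<L>. A K L \<times> B K L)"
      by (rule Alster_gdelta_tube[OF \<open>Alster Y\<close> K AB[OF K]])
    then show ?thesis
      unfolding tube_def by blast
  qed
  then obtain A' \<L> where "\<And>K. compactin X K \<Longrightarrow> tube K (A' K) (\<L> K)"
    by metis
  then have tube: "\<And>K. compactin X K \<Longrightarrow> gdelta_in X (A' K) \<and> K \<subseteq> A' K \<and> countable (\<L> K)
      \<and> (\<forall>L\<in>\<L> K. compactin Y L) \<and> A' K \<times> topspace Y \<subseteq> (\<Union>L\<in>\<L> K. A K L \<times> B K L)"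
    unfolding tube_def by blast
  have "gdelta_in X (A' K)" "K \<subseteq> A' K" if "compactin X K" for K
    using tube[OF that] by simp_all
  then obtain \<K> where \<K>: "countable \<K>" "\<forall>K\<in>\<K>. compactin X K"
    and cov: "topspace X \<subseteq> \<Union>(A' ` \<K>)"
    by (rule Alster_countable_subfamily[OF \<open>Alster X\<close>])
  show thesis
  proof
    show "countable (Sigma \<K> \<L>)"
      using \<K> tube by (intro countable_SIGMA) auto
    show "\<forall>(K, L)\<in>Sigma \<K> \<L>. compactin X K \<and> compactin Y L"
      using \<K>(2) tube by blast
    show "topspace X \<times> topspace Y \<subseteq> (\<Union>(K, L)\<in>Sigma \<K> \<L>. A K L \<times> B K L)"
    proof (clarify)
      fix x y assume "x \<in> topspace X" "y \<in> topspace Y"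
      then obtain K where K: "K \<in> \<K>" "x \<in> A' K"
        using cov by blast
      then have "(x, y) \<in> (\<Union>L\<in>\<L> K. A K L \<times> B K L)"
        using tube[of K] \<K>(2) \<open>y \<in> topspace Y\<close> by blast
      then show "(x, y) \<in> (\<Union>(K, L)\<in>Sigma \<K> \<L>. A K L \<times> B K L)"
        using K(1) by blast
    qed
  qed
qed

lemma Alster_prod_topology:
  assumes "Alster X" "Alster Y"
  shows "Alster (prod_topology X Y)"
  unfolding Alster_def
proof (intro allI impI, elim conjE)
  fix \<G> assume gd: "\<forall>G\<in>\<G>. gdelta_in (prod_topology X Y) G"
    and cpt: "\<forall>K. compactin (prod_topology X Y) K \<longrightarrow> (\<exists>G\<in>\<G>. K \<subseteq> G)"
  have "\<exists>G A B. G \<in> \<G> \<and> gdelta_in X A \<and> gdelta_in Y B \<and> K \<subseteq> A \<and> L \<subseteq> B \<and> A \<times> B \<subseteq> G"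
    if K: "compactin X K" and L: "compactin Y L" for K L
  proof -
    have "compactin (prod_topology X Y) (K \<times> L)"
      using K L by (simp add: compactin_Times)
    then obtain G where "G \<in> \<G>" "K \<times> L \<subseteq> G"
      using cpt by blast
    moreover have "gdelta_in (prod_topology X Y) G"
      using gd \<open>G \<in> \<G>\<close> by blast
    then obtain A B where "gdelta_in X A" "gdelta_in Y B" "K \<subseteq> A" "L \<subseteq> B" "A \<times> B \<subseteq> G"
      by (rule Wallace_theorem_prod_topology_gdelta[OF _ K L \<open>K \<times> L \<subseteq> G\<close>])
    ultimately show ?thesis
      by blast
  qed
  then obtain G A B where G: "\<And>K L. \<lbrakk>compactin X K; compactin Y L\<rbrakk> \<Longrightarrow> G K L \<in> \<G>"
    and AB: "\<And>K L. \<lbrakk>compactin X K; compactin Y L\<rbrakk> \<Longrightarrow>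
      gdelta_in X (A K L) \<and> gdelta_in Y (B K L) \<and> K \<subseteq> A K L \<and> L \<subseteq> B K L"
    and box: "\<And>K L. \<lbrakk>compactin X K; compactin Y L\<rbrakk> \<Longrightarrow> A K L \<times> B K L \<subseteq> G K L"
    by metis
  obtain \<P> where \<P>: "countable \<P>" "\<forall>(K, L)\<in>\<P>. compactin X K \<and> compactin Y L"
    and cov: "topspace X \<times> topspace Y \<subseteq> (\<Union>(K, L)\<in>\<P>. A K L \<times> B K L)"
    by (rule Alster_prod_countable_boxes[OF assms AB])
  have "(\<lambda>(K, L). G K L) ` \<P> \<subseteq> \<G>"
  proof clarify
    fix K L assume "(K, L) \<in> \<P>"
    then show "G K L \<in> \<G>"
      using \<P>(2) G by blast
  qed
  moreover have "topspace (prod_topology X Y) \<subseteq> \<Union>((\<lambda>(K, L). G K L) ` \<P>)"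
  proof
    fix p assume "p \<in> topspace (prod_topology X Y)"
    then obtain K L where KL: "(K, L) \<in> \<P>" "p \<in> A K L \<times> B K L"
      using cov by auto
    then have "p \<in> G K L"
      using \<P>(2) box by blast
    then show "p \<in> \<Union>((\<lambda>(K, L). G K L) ` \<P>)"
      using KL(1) by blast
  qed
  ultimately show "\<exists>\<C>\<subseteq>\<G>. countable \<C> \<and> topspace (prod_topology X Y) \<subseteq> \<Union>\<C>"
    using \<P>(1) by blast
qed

lemma continuous_map_product_topology_fun_upd:
  "continuous_map (prod_topology (product_topology X I) (X i)) (product_topology X (insert i I))
     (\<lambda>p. (fst p)(i := snd p))"
  unfolding continuous_map_componentwise
proof (intro conjI ballI)
  show "(\<lambda>p. (fst p)(i := snd p)) ` topspace (prod_topology (product_topology X I) (X i))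
      \<subseteq> extensional (insert i I)"
    by (auto simp: extensional_def PiE_def)
  fix j assume "j \<in> insert i I"
  then consider "j = i" | "j \<in> I" "j \<noteq> i"
    by blast
  then show "continuous_map (prod_topology (product_topology X I) (X i)) (X j)
      (\<lambda>p. ((fst p)(i := snd p)) j)"
  proof cases
    case 1
    then show ?thesis
      by (simp add: continuous_map_snd)
  next
    case 2
    then show ?thesis
      using continuous_map_compose[OF continuous_map_fst
          continuous_map_product_projection[OF \<open>j \<in> I\<close>]]
      by (simp add: o_def)
  qed
qed

lemma image_fun_upd_product_topology:
  "(\<lambda>p. (fst p)(i := snd p)) ` topspace (prod_topology (product_topology X I) (X i))
     = topspace (product_topology X (insert i I))"
proof
  show "(\<lambda>p. (fst p)(i := snd p)) ` topspace (prod_topology (product_topology X I) (X i))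
      \<subseteq> topspace (product_topology X (insert i I))"
    using continuous_map_image_subset_topspace[OF continuous_map_product_topology_fun_upd] .
  show "topspace (product_topology X (insert i I))
      \<subseteq> (\<lambda>p. (fst p)(i := snd p)) ` topspace (prod_topology (product_topology X I) (X i))"
  proof
    fix g assume g: "g \<in> topspace (product_topology X (insert i I))"
    then have "g = (restrict g I)(i := g i)"
      by (intro ext) (auto simp: PiE_iff extensional_def)
    moreover have "(restrict g I, g i) \<in> topspace (prod_topology (product_topology X I) (X i))"
      using g by auto
    ultimately show
      "g \<in> (\<lambda>p. (fst p)(i := snd p)) ` topspace (prod_topology (product_topology X I) (X i))"
      by (intro image_eqI[where x = "(restrict g I, g i)"]) simp_all
  qed
qed

lemma Alster_product_topology:
  assumes "finite I" "\<And>i. i \<in> I \<Longrightarrow> Alster (X i)"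
  shows "Alster (product_topology X I)"
  using assms
proof (induction I rule: finite_induct)
  case empty
  have "finite (topspace (product_topology X {}))"
    by simp
  then have "compact_space (product_topology X {})"
    by (simp add: compact_space_def finite_imp_compactin_eq)
  then show ?case
    by (rule compact_space_imp_Alster)
next
  case (insert i I)
  then have "Alster (prod_topology (product_topology X I) (X i))"
    by (simp add: Alster_prod_topology)
  then show ?case
    by (rule Alster_continuous_image[OF _ continuous_map_product_topology_fun_upd
          image_fun_upd_product_topology])
qed

lemma point_cofinite_cover_range:
  assumes "\<And>n. openin X (V n)" and "\<And>n. \<not> topspace X \<subseteq> V n"
    and "\<And>x. x \<in> topspace X \<Longrightarrow> eventually (\<lambda>n. x \<in> V n) sequentially"
  shows "point_cofinite_cover X (range V)"
proof -
  have "infinite (range V)"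
  proof
    assume "finite (range V)"
    then obtain W where "W \<in> range V" and inf: "infinite (V -` {W})"
      by (rule inf_img_fin_domE) simp
    then obtain x where x: "x \<in> topspace X" "x \<notin> W"
      using assms(2) by blast
    have "V -` {W} \<subseteq> {n. x \<notin> V n}"
      using x(2) by blast
    moreover have "finite {n. x \<notin> V n}"
      using assms(3)[OF x(1)] by (simp add: cofinite_eq_sequentially[symmetric] eventually_cofinite)
    ultimately show False
      using inf finite_subset by blast
  qed
  moreover have "topspace X \<subseteq> \<Union>(range V)"
  proof
    fix x assume "x \<in> topspace X"
    then obtain n where "x \<in> V n"
      using eventually_happens'[OF sequentially_bot assms(3)] by blast
    then show "x \<in> \<Union>(range V)"
      by blast
  qed
  then have "open_cover X (range V)"
    unfolding open_cover_def using assms(1) by blast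
  moreover have "finite {U \<in> range V. x \<notin> U}" if x: "x \<in> topspace X" for x
  proof -
    obtain m where "\<And>n. n \<ge> m \<Longrightarrow> x \<in> V n"
      using assms(3)[OF x] by (auto simp: eventually_sequentially)
    then have "{U \<in> range V. x \<notin> U} \<subseteq> V ` {..<m}"
      using not_less by blast
    then show ?thesis
      by (rule finite_subset) simp
  qed
  ultimately show ?thesis
    unfolding point_cofinite_cover_def by blast
qed

lemma Alster_countable_finite_selections:
  fixes \<U> :: "nat \<Rightarrow> 'a set set"
  assumes "Alster X" and "\<forall>n. open_cover X (\<U> n)"
  obtains \<F> :: "nat \<Rightarrow> nat \<Rightarrow> 'a set set"
  where "\<forall>m n. finite (\<F> m n) \<and> \<F> m n \<subseteq> \<U> n"
    and "\<forall>x\<in>topspace X. \<exists>m. \<forall>n. x \<in> \<Union>(\<F> m n)"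
proof -
  have opU: "\<And>U. U \<in> \<U> n \<Longrightarrow> openin X U" and covU: "topspace X \<subseteq> \<Union>(\<U> n)" for n
    using assms(2) unfolding open_cover_def by blast+
  have "\<exists>\<Phi>. finite \<Phi> \<and> \<Phi> \<subseteq> \<U> n \<and> K \<subseteq> \<Union>\<Phi>" if K: "compactin X K" for K n
  proof -
    have sub: "K \<subseteq> \<Union>(\<U> n)"
      using compactin_subset_topspace[OF K] covU by blast
    show ?thesis
      by (rule compactinD[OF K _ sub]) (rule opU)
  qed
  then obtain \<Phi> where \<Phi>: "\<And>K n. compactin X K \<Longrightarrow>
      finite (\<Phi> K n) \<and> \<Phi> K n \<subseteq> \<U> n \<and> K \<subseteq> \<Union>(\<Phi> K n)"
    by metis
  have op\<Phi>: "openin X (\<Union>(\<Phi> K n))" if "compactin X K" for K n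
    using \<Phi>[OF that] opU by (intro openin_Union) blast
  have "gdelta_in X (\<Inter>n. \<Union>(\<Phi> K n))" if "compactin X K" for K
    by (rule gdelta_in_Inter) (use op\<Phi>[OF that] in \<open>auto intro: open_imp_gdelta_in\<close>)
  moreover have "K \<subseteq> (\<Inter>n. \<Union>(\<Phi> K n))" if "compactin X K" for K
    using \<Phi>[OF that] by blast
  ultimately obtain \<K> where \<K>: "countable \<K>" "\<forall>K\<in>\<K>. compactin X K"
    and cov: "topspace X \<subseteq> (\<Union>K\<in>\<K>. \<Inter>n. \<Union>(\<Phi> K n))"
    by (rule Alster_countable_subfamily[OF \<open>Alster X\<close>])
  \<comment> \<open>Adding \<open>{}\<close> keeps the enumerated family nonempty, as \<open>from_nat_into\<close> requires.\<close>
  define e where "e = from_nat_into (insert {} \<K>)"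
  have range_e: "range e = insert {} \<K>"
    unfolding e_def by (rule range_from_nat_into) (simp_all add: \<K>(1))
  have e: "compactin X (e m)" for m
  proof -
    have "e m \<in> insert {} \<K>"
      using range_e by blast
    then show ?thesis
      using \<K>(2) by auto
  qed
  show thesis
  proof (rule that[of "\<lambda>m. \<Phi> (e m)"])
    show "\<forall>m n. finite (\<Phi> (e m) n) \<and> \<Phi> (e m) n \<subseteq> \<U> n"
      using \<Phi>[OF e] by blast
    show "\<forall>x\<in>topspace X. \<exists>m. \<forall>n. x \<in> \<Union>(\<Phi> (e m) n)"
    proof
      fix x assume x: "x \<in> topspace X"
      have "x \<in> (\<Union>K\<in>\<K>. \<Inter>n. \<Union>(\<Phi> K n))"
        using cov x by (rule subsetD)
      then obtain K where K: "K \<in> \<K>" "x \<in> (\<Inter>n. \<Union>(\<Phi> K n))"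
        by blast
      then obtain m where "K = e m"
        using range_e by (metis insertCI rangeE)
      then show "\<exists>m. \<forall>n. x \<in> \<Union>(\<Phi> (e m) n)"
        using K(2) by (intro exI[of _ m]) simp
    qed
  qed
qed

lemma Alster_imp_Hurewicz:
  assumes "Alster X"
  shows "Hurewicz X"
  unfolding Hurewicz_def
proof (intro allI impI)
  fix \<U> :: "nat \<Rightarrow> 'a set set"
  assume "\<forall>n. open_cover X (\<U> n) \<and> \<not> (\<exists>\<F>\<subseteq>\<U> n. finite \<F> \<and> topspace X \<subseteq> \<Union>\<F>)"
  then have cover: "\<forall>n. open_cover X (\<U> n)"
    and no_fin: "\<And>n \<F>. \<lbrakk>\<F> \<subseteq> \<U> n; finite \<F>\<rbrakk> \<Longrightarrow> \<not> topspace X \<subseteq> \<Union>\<F>"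
    by blast+
  obtain \<F> :: "nat \<Rightarrow> nat \<Rightarrow> 'a set set" where \<F>: "\<forall>m n. finite (\<F> m n) \<and> \<F> m n \<subseteq> \<U> n"
    and sel: "\<forall>x\<in>topspace X. \<exists>m. \<forall>n. x \<in> \<Union>(\<F> m n)"
    by (rule Alster_countable_finite_selections[OF \<open>Alster X\<close> cover])
  define F where "F n = (\<Union>m\<le>n. \<F> m n)" for n
  have F: "finite (F n)" "F n \<subseteq> \<U> n" for n
    unfolding F_def using \<F> by auto
  have "point_cofinite_cover X (range (\<lambda>n. \<Union>(F n)))"
  proof (rule point_cofinite_cover_range)
    show "openin X (\<Union>(F n))" for n
      using F(2) cover unfolding open_cover_def by (intro openin_Union) blast
    show "\<not> topspace X \<subseteq> \<Union>(F n)" for n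
      using no_fin[OF F(2) F(1)] .
    show "eventually (\<lambda>n. x \<in> \<Union>(F n)) sequentially" if x: "x \<in> topspace X" for x
    proof -
      obtain m where "\<forall>n. x \<in> \<Union>(\<F> m n)"
        using sel x by blast
      then have "x \<in> \<Union>(F n)" if "m \<le> n" for n
        unfolding F_def using that by blast
      then show ?thesis
        by (rule eventually_sequentiallyI)
    qed
  qed
  then show "\<exists>\<F>. (\<forall>n. finite (\<F> n) \<and> \<F> n \<subseteq> \<U> n) \<and> point_cofinite_cover X (range (\<lambda>n. \<Union>(\<F> n)))"
    using F by blast
qed

theorem corollary2p4:
  fixes X :: "'a topology"
  assumes "Alster X"
  shows "\<forall>k::nat. k > 0 \<longrightarrow> Hurewicz (product_topology (\<lambda>i. X) {..<k})"
  using assms by (simp add: Alster_product_topology Alster_imp_Hurewicz)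

end
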